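(* Let $\pi$ be a permutation of $\{1,\dots,n\}$ and consider forkstack sorting with unlimited capacities ($s=t=\infty$). Then $\pi$ is not sortable if and only if every allowable sequence of moves after which the input stack is empty produces, at some moment, the dreaded 13 in the working stack.
   Context: Forkstack sorting with capacities $s,t\in\{1,2,3,\dots\}\cup\{\infty\}$: a permutation $\pi=\pi_1\pi_2\cdots\pi_n$ of $\{1,\dots,n\}$ is placed on an input stack with $\pi_1$ on top and $\pi_n$ at the bottom; a working stack and an output stack are initially empty. A move is either (i) remove the top $k$ elements of the input stack, $1\le k\le s$, and place them as a block, with their relative order unchanged, on top of the working stack; or (ii) remove the top $l$ elements of the working stack, $1\le l\le t$, and place them as a block, with relative order unchanged, on top of the output stack. $\pi$ is sortable if some finite sequence of moves ends with the input and working stacks empty and the output stack reading $1,2,\dots,n$ from top to bottom. A sequence of moves is allowable if, after performing it, the output stack read from top to bottom is $k,k+1,\dots,n$ for some $k$ (or is empty). The dreaded 13 occurs at a moment if the working stack then contains an element $a$ lying immediately above an element $b$ with $a<b-1$. *)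

theory Defs
  imports Main "HOL-Library.Extended_Nat"
begin

text \<open>Forkstack configurations: (input, working, output), each a list with the
  head being the top of the stack.\<close>
type_synonym fstate = "nat list \<times> nat list \<times> nat list"

datatype fmove = Push nat | Pop nat

fun apply_move :: "enat \<Rightarrow> enat \<Rightarrow> fmove \<Rightarrow> fstate \<Rightarrow> fstate option" where
  "apply_move s t (Push k) (inp, w, out) =
     (if 1 \<le> k \<and> enat k \<le> s \<and> k \<le> length inp
      then Some (drop k inp, take k inp @ w, out) else None)"
| "apply_move s t (Pop l) (inp, w, out) =
     (if 1 \<le> l \<and> enat l \<le> t \<and> l \<le> length w
      then Some (inp, drop l w, take l w @ out) else None)"

fun exec_moves :: "enat \<Rightarrow> enat \<Rightarrow> fmove list \<Rightarrow> fstate \<Rightarrow> fstate option" where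
  "exec_moves s t [] st = Some st"
| "exec_moves s t (m # ms) st =
     (case apply_move s t m st of None \<Rightarrow> None | Some st' \<Rightarrow> exec_moves s t ms st')"

definition init_state :: "nat list \<Rightarrow> fstate" where
  "init_state \<pi> = (\<pi>, [], [])"

definition sortable :: "enat \<Rightarrow> enat \<Rightarrow> nat list \<Rightarrow> bool" where
  "sortable s t \<pi> \<longleftrightarrow>
     (\<exists>ms. exec_moves s t ms (init_state \<pi>) = Some ([], [], [1..<Suc (length \<pi>)]))"

definition allowable :: "enat \<Rightarrow> enat \<Rightarrow> nat list \<Rightarrow> fmove list \<Rightarrow> bool" where
  "allowable s t \<pi> ms \<longleftrightarrow>
     (\<exists>inp w out. exec_moves s t ms (init_state \<pi>) = Some (inp, w, out) \<and>
        (out = [] \<or> (\<exists>k\<ge>1. out = [k..<Suc (length \<pi>)])))"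

definition dreaded13 :: "nat list \<Rightarrow> bool" where
  "dreaded13 w \<longleftrightarrow> (\<exists>i. Suc i < length w \<and> int (w ! i) < int (w ! Suc i) - 1)"

definition work_of :: "fstate \<Rightarrow> nat list" where
  "work_of st = fst (snd st)"

definition input_of :: "fstate \<Rightarrow> nat list" where
  "input_of st = fst st"

end

theory Submission
  imports Defs "HOL-Library.Multiset"
begin

(* A dreaded 13 can never be repaired: once a lies directly above b with a < b - 1 in the
   working stack, at every later moment either a is still directly above b, or a has reached
   the output while b has not, or the two are adjacent in the output, or b lies above a in the
   output; none of this is compatible with the sorted output.
   Conversely, suppose the input is empty, the output is k, ..., n and the working stack holds
   1, ..., k - 1 without a dreaded 13. Above its maximum k - 1 every element is at least its
   lower neighbour minus one, which by distinctness forces the top segment down to k - 1 to be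
   a run j, ..., k - 1; popping it as one block leaves the same situation with j in place of k. *)

lemma dreaded13_iff: "dreaded13 w \<longleftrightarrow> (\<exists>u a b v. w = u @ a # b # v \<and> a + 1 < b)"
proof
  assume "dreaded13 w"
  then obtain i where i: "Suc i < length w" "int (w ! i) < int (w ! Suc i) - 1"
    unfolding dreaded13_def by blast
  then have "w = take i w @ w ! i # w ! Suc i # drop (Suc (Suc i)) w"
    by (metis Cons_nth_drop_Suc Suc_lessD append_take_drop_id)
  moreover have "w ! i + 1 < w ! Suc i" using i(2) by linarith
  ultimately show "\<exists>u a b v. w = u @ a # b # v \<and> a + 1 < b" by blast
next
  assume "\<exists>u a b v. w = u @ a # b # v \<and> a + 1 < b"
  then obtain u a b v where "w = u @ a # b # v" "a + 1 < b" by blast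
  then show "dreaded13 w"
    unfolding dreaded13_def by (intro exI[of _ "length u"]) (simp add: nth_append)
qed

lemma dreaded13_append_left: "dreaded13 xs \<Longrightarrow> dreaded13 (xs @ ys)"
  unfolding dreaded13_iff by fastforce

lemma dreaded13_append_right: "dreaded13 ys \<Longrightarrow> dreaded13 (xs @ ys)"
  unfolding dreaded13_iff by (metis append.assoc)

lemma upt_append: "i \<le> j \<Longrightarrow> j \<le> k \<Longrightarrow> [i..<j] @ [j..<k] = [i..<k]"
  by (metis le_add_diff_inverse upt_add_eq_append)

lemma upt_eq_append_Cons_Cons:
  assumes "[c..<N] = xs @ a # b # ys"
  shows "b = Suc a"
proof -
  from assms have "[c + length xs..<N] = a # b # ys" by (metis drop_upt append_eq_conv_conj)
  then show ?thesis by (simp add: upt_eq_Cons_conv)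
qed

lemma consecutive_run_of_no_dreaded13:
  assumes "distinct (xs @ [m])" "\<forall>x\<in>set xs. x < m" "\<not> dreaded13 (xs @ [m])"
  shows "\<exists>j. xs @ [m] = [j..<Suc m]"
  using assms
proof (induction xs arbitrary: m rule: rev_induct)
  case Nil
  then show ?case by (intro exI[of _ m]) simp
next
  case (snoc y ys)
  have "\<not> y + 1 < m"
    using snoc.prems(3) unfolding dreaded13_iff by fastforce
  with snoc.prems(2) have m: "m = Suc y" by simp
  have "y \<notin> set ys" using snoc.prems(1) by simp
  then have "\<forall>x\<in>set ys. x < y" using snoc.prems(2) m by (auto simp: less_Suc_eq)
  moreover have "distinct (ys @ [y])" "\<not> dreaded13 (ys @ [y])"
    using snoc.prems(1,3) dreaded13_append_left[of "ys @ [y]" "[m]"] by auto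
  ultimately obtain j where "ys @ [y] = [j..<Suc y]" using snoc.IH by blast
  moreover have "j \<le> Suc y" using calculation by (cases "j \<le> Suc y") auto
  ultimately show ?case using m by (intro exI[of _ j]) simp
qed

lemma apply_move_mset:
  assumes "apply_move s t mv (inp, w, out) = Some (inp', w', out')"
  shows "mset (inp' @ w' @ out') = mset (inp @ w @ out)"
proof (cases mv)
  case (Push k)
  then have "inp = take k inp @ inp'" "w' = take k inp @ w" "out' = out"
    using assms by (auto split: if_splits)
  then show ?thesis by (metis mset_append add.commute add.left_commute)
next
  case (Pop l)
  then have "inp' = inp" "w = take l w @ w'" "out' = take l w @ out"
    using assms by (auto split: if_splits)
  then show ?thesis by (metis mset_append add.commute add.left_commute)
qed

lemma exec_moves_mset:
  "exec_moves s t ms (inp, w, out) = Some (inp', w', out') \<Longrightarrow>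
   mset (inp' @ w' @ out') = mset (inp @ w @ out)"
proof (induction ms arbitrary: inp w out)
  case (Cons mv ms)
  then obtain inp1 w1 out1 where "apply_move s t mv (inp, w, out) = Some (inp1, w1, out1)"
    and "exec_moves s t ms (inp1, w1, out1) = Some (inp', w', out')"
    by (auto split: option.splits)
  with Cons.IH show ?case using apply_move_mset by metis
qed simp

lemma exec_moves_append:
  "exec_moves s t (xs @ ys) st =
     (case exec_moves s t xs st of None \<Rightarrow> None | Some st' \<Rightarrow> exec_moves s t ys st')"
  by (induction xs arbitrary: st) (auto split: option.splits)

lemma pop_all_of_no_dreaded13:
  assumes "distinct w" "set w = {a..<k}" "a \<le> k" "k \<le> N" "\<not> dreaded13 w"
  shows "\<exists>ms. exec_moves s \<infinity> ms (inp, w, [k..<N]) = Some (inp, [], [a..<N])"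
  using assms
proof (induction "length w" arbitrary: w k rule: less_induct)
  case less
  show ?case
  proof (cases "w = []")
    case True
    then have "k = a" using less.prems(2,3) by simp
    with True show ?thesis by (intro exI[of _ "[]"]) simp
  next
    case False
    then have "a < k" using less.prems(2) by (metis atLeastLessThan_empty_iff set_empty)
    then obtain m where k: "k = Suc m" and "a \<le> m" by (cases k) auto
    then have "m \<in> set w" using less.prems(2) by simp
    then obtain xs w' where w: "w = (xs @ [m]) @ w'" using split_list[of m w] by auto
    have "m \<notin> set xs" using less.prems(1) w by simp
    then have "\<forall>x\<in>set xs. x < m" using less.prems(2) w k by (auto simp: less_Suc_eq)
    moreover have "distinct (xs @ [m])" using less.prems(1) w by (metis distinct_append)
    moreover have "\<not> dreaded13 (xs @ [m])" using less.prems(5) w dreaded13_append_left by blast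
    ultimately obtain j where run: "xs @ [m] = [j..<k]"
      using consecutive_run_of_no_dreaded13 k by blast
    then have "j < k" by (cases "j < k") auto
    then have "j \<in> set w" using w run by simp
    then have "a \<le> j" using less.prems(2) by simp
    have "set w' = {a..<j}"
    proof -
      have "set w = {j..<k} \<union> set w'" "{j..<k} \<inter> set w' = {}"
        using less.prems(1) w run by (metis distinct_append set_append set_upt)+
      then have "set w' = {a..<k} - {j..<k}" using less.prems(2) by blast
      also have "\<dots> = {a..<j}" using \<open>j < k\<close> by auto
      finally show ?thesis .
    qed
    moreover have "distinct w'" using less.prems(1) w by (metis distinct_append)
    moreover have "\<not> dreaded13 w'" using less.prems(5) w dreaded13_append_right by blast
    moreover have "length w' < length w" using w by simp
    ultimately obtain ms where ms: "exec_moves s \<infinity> ms (inp, w', [j..<N]) = Some (inp, [], [a..<N])"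
      using less.hyps \<open>a \<le> j\<close> \<open>j < k\<close> less.prems(4) by (meson order.strict_trans2 less_imp_le)
    have "apply_move s \<infinity> (Pop (k - j)) (inp, w, [k..<N]) = Some (inp, w', [j..<N])"
      using w run \<open>j < k\<close> less.prems(4) by (simp add: upt_append, linarith)
    with ms show ?thesis by (intro exI[of _ "Pop (k - j) # ms"]) simp
  qed
qed

lemma allowable_emptied_state:
  assumes "allowable s t \<pi> ms" and "input_of (the (exec_moves s t ms (init_state \<pi>))) = []"
  obtains w k where "exec_moves s t ms (init_state \<pi>) = Some ([], w, [k..<Suc (length \<pi>)])"
    and "1 \<le> k" and "k \<le> Suc (length \<pi>)"
proof -
  let ?N = "Suc (length \<pi>)"
  from assms(1) obtain inp w out where exec: "exec_moves s t ms (init_state \<pi>) = Some (inp, w, out)"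
    and out: "out = [] \<or> (\<exists>k\<ge>1. out = [k..<?N])"
    unfolding allowable_def by blast
  moreover from exec assms(2) have "inp = []" unfolding input_of_def by simp
  moreover obtain k where "1 \<le> k" "k \<le> ?N" "out = [k..<?N]"
  proof (cases "out = []")
    case True
    then show ?thesis using that[of ?N] by simp
  next
    case False
    with out obtain k where "1 \<le> k" "out = [k..<?N]" by blast
    moreover from False this(2) have "k \<le> ?N" by (metis upt_conv_Nil nat_le_linear)
    ultimately show ?thesis using that by blast
  qed
  ultimately show ?thesis using that by (simp del: upt_Suc)
qed

lemma sortable_if_emptied_without_dreaded13:
  assumes "distinct \<pi>" "set \<pi> = {1..length \<pi>}"
    and "allowable s \<infinity> \<pi> ms" "input_of (the (exec_moves s \<infinity> ms (init_state \<pi>))) = []"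
    and no13: "\<not> dreaded13 (work_of (the (exec_moves s \<infinity> ms (init_state \<pi>))))"
  shows "sortable s \<infinity> \<pi>"
proof -
  obtain w k where exec: "exec_moves s \<infinity> ms (init_state \<pi>) = Some ([], w, [k..<Suc (length \<pi>)])"
    and "1 \<le> k" "k \<le> Suc (length \<pi>)"
    using allowable_emptied_state[OF assms(3,4)] .
  from exec no13 have "\<not> dreaded13 w" by (simp add: work_of_def)
  let ?out = "[k..<Suc (length \<pi>)]"
  have "mset (w @ ?out) = mset \<pi>"
    using exec_moves_mset[OF exec[unfolded init_state_def]] by simp
  then have "distinct (w @ ?out)" "set (w @ ?out) = {1..length \<pi>}"
    using assms(1,2) by (metis mset_eq_imp_distinct_iff, metis set_mset_mset)
  then have "distinct w" "set w \<inter> set ?out = {}" "set w \<union> set ?out = {1..length \<pi>}"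
    by (simp_all del: upt_Suc set_upt)
  moreover have "{1..length \<pi>} - set ?out = {1..<k}"
    using \<open>k \<le> Suc (length \<pi>)\<close> by auto
  ultimately have "distinct w" "set w = {1..<k}" by blast+
  then obtain ms' where "exec_moves s \<infinity> ms' ([], w, ?out) = Some ([], [], [1..<Suc (length \<pi>)])"
    using pop_all_of_no_dreaded13 \<open>1 \<le> k\<close> \<open>k \<le> Suc (length \<pi>)\<close> \<open>\<not> dreaded13 w\<close>
    by blast
  then have "exec_moves s \<infinity> (ms @ ms') (init_state \<pi>) = Some ([], [], [1..<Suc (length \<pi>)])"
    using exec by (simp add: exec_moves_append)
  then show ?thesis unfolding sortable_def by blast
qed

definition adjacent_pair_trace :: "nat \<Rightarrow> nat \<Rightarrow> nat list \<Rightarrow> nat list \<Rightarrow> bool" where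
  "adjacent_pair_trace a b w out \<longleftrightarrow>
     (\<exists>w1 w2. w = w1 @ a # b # w2) \<or> (b \<in> set w \<and> a \<in> set out) \<or>
     (\<exists>o1 o2. out = o1 @ a # b # o2) \<or> (\<exists>o1 o2 o3. out = o1 @ b # o2 @ a # o3)"

lemma adjacent_pair_trace_push:
  "adjacent_pair_trace a b w out \<Longrightarrow> adjacent_pair_trace a b (xs @ w) out"
  unfolding adjacent_pair_trace_def by (metis UnI2 append.assoc set_append)

lemma adjacent_pair_trace_pop:
  assumes "adjacent_pair_trace a b (ys @ w) out"
  shows "adjacent_pair_trace a b w (ys @ out)"
proof -
  consider (in_work) w1 w2 where "ys @ w = w1 @ a # b # w2"
    | (straddling) "b \<in> set (ys @ w)" "a \<in> set out"
    | (in_output) "(\<exists>o1 o2. out = o1 @ a # b # o2) \<or> (\<exists>o1 o2 o3. out = o1 @ b # o2 @ a # o3)"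
    using assms unfolding adjacent_pair_trace_def by blast
  then show ?thesis
  proof cases
    case in_work
    then consider us where "w = us @ a # b # w2"
      | "ys = w1 @ [a]" "w = b # w2"
      | us where "ys = w1 @ a # b # us"
      by (auto simp: append_eq_append_conv2 append_eq_Cons_conv)
    then show ?thesis by cases (fastforce simp: adjacent_pair_trace_def)+
  next
    case straddling
    then show ?thesis unfolding adjacent_pair_trace_def
      by (auto dest!: split_list) (metis append.assoc append_Cons)
  next
    case in_output
    then show ?thesis unfolding adjacent_pair_trace_def by (metis append.assoc)
  qed
qed

lemma adjacent_pair_trace_exec:
  "exec_moves s t ms (inp, w, out) = Some (inp', w', out') \<Longrightarrow>
   adjacent_pair_trace a b w out \<Longrightarrow> adjacent_pair_trace a b w' out'"
proof (induction ms arbitrary: inp w out)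
  case Nil
  then show ?case by simp
next
  case (Cons mv ms)
  show ?case
  proof (cases mv)
    case (Push k)
    with Cons show ?thesis by (auto split: if_splits intro: adjacent_pair_trace_push)
  next
    case (Pop l)
    have "adjacent_pair_trace a b (drop l w) (take l w @ out)"
      using Cons.prems(2) adjacent_pair_trace_pop[of a b "take l w" "drop l w"] by simp
    with Cons Pop show ?thesis by (auto split: if_splits)
  qed
qed

lemma dreaded13_never_sorted:
  assumes "dreaded13 w"
  shows "exec_moves s t ms (inp, w, out) \<noteq> Some ([], [], [c..<N])"
proof
  assume exec: "exec_moves s t ms (inp, w, out) = Some ([], [], [c..<N])"
  obtain u a b v where "w = u @ a # b # v" and gap: "a + 1 < b"
    using assms unfolding dreaded13_iff by blast
  then have "adjacent_pair_trace a b w out" unfolding adjacent_pair_trace_def by blast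
  then have "adjacent_pair_trace a b [] [c..<N]" using adjacent_pair_trace_exec exec by blast
  then consider o1 o2 where "[c..<N] = o1 @ a # b # o2"
    | o1 o2 o3 where "[c..<N] = o1 @ b # o2 @ a # o3"
    unfolding adjacent_pair_trace_def by auto
  then show False
  proof cases
    case 1
    then show False using gap upt_eq_append_Cons_Cons by fastforce
  next
    case 2
    then have "b < a" using sorted_wrt_upt[of c N] by (simp add: sorted_wrt_append)
    then show False using gap by simp
  qed
qed

lemma sorting_run_free_of_dreaded13:
  assumes "exec_moves s t ms st = Some ([], [], [c..<N])"
  shows "\<not> dreaded13 (work_of (the (exec_moves s t (take i ms) st)))"
proof -
  obtain st' where "exec_moves s t (take i ms) st = Some st'"
    and "exec_moves s t (drop i ms) st' = Some ([], [], [c..<N])"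
    using assms exec_moves_append[of s t "take i ms" "drop i ms"] by (auto split: option.splits)
  then show ?thesis using dreaded13_never_sorted by (cases st') (auto simp: work_of_def)
qed

theorem proposition1:
  fixes \<pi> :: "nat list" and n :: nat
  assumes "length \<pi> = n" and "distinct \<pi>" and "set \<pi> = {1..n}"
  shows "\<not> sortable \<infinity> \<infinity> \<pi> \<longleftrightarrow>
    (\<forall>ms. allowable \<infinity> \<infinity> \<pi> ms \<and>
           input_of (the (exec_moves \<infinity> \<infinity> ms (init_state \<pi>))) = [] \<longrightarrow>
       (\<exists>i\<le>length ms. dreaded13 (work_of (the (exec_moves \<infinity> \<infinity> (take i ms) (init_state \<pi>))))))"
proof (cases "sortable \<infinity> \<infinity> \<pi>")
  case True
  then obtain ms
    where sorts: "exec_moves \<infinity> \<infinity> ms (init_state \<pi>) = Some ([], [], [1..<Suc (length \<pi>)])"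
    unfolding sortable_def by blast
  then have "allowable \<infinity> \<infinity> \<pi> ms" "input_of (the (exec_moves \<infinity> \<infinity> ms (init_state \<pi>))) = []"
    unfolding allowable_def input_of_def by (auto simp del: upt_Suc)
  moreover have "\<not> dreaded13 (work_of (the (exec_moves \<infinity> \<infinity> (take i ms) (init_state \<pi>))))" for i
    using sorting_run_free_of_dreaded13[OF sorts] .
  ultimately show ?thesis using True by blast
next
  case False
  have "set \<pi> = {1..length \<pi>}" using assms(1,3) by simp
  with False assms(2) have "dreaded13 (work_of (the (exec_moves \<infinity> \<infinity> (take (length ms) ms) (init_state \<pi>))))"
    if "allowable \<infinity> \<infinity> \<pi> ms" "input_of (the (exec_moves \<infinity> \<infinity> ms (init_state \<pi>))) = []" for ms
    using sortable_if_emptied_without_dreaded13 that by auto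
  with False show ?thesis by blast
qed

end
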